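(* Let $\mathcal A=(A,\le,\mathrm{app},\to,\mathsf k,\mathsf s,\Phi)$ be a full adjunction implicative ordered combinatory algebra, and let $\mathcal K=\mathcal K_{\mathcal A\bullet}$ be the abstract Krivine structure with $\Lambda=\Pi=A$, $s\perp\pi\iff s\le\pi$, $\mathrm{app}(s,t)=st$, $\mathrm{push}(s,\pi)=s\to\pi$, $\mathsf K=\mathsf k$, $\mathsf S=\mathsf s$, $\mathrm{QP}=\Phi$. Consider the preorder $(A,\sqsubseteq)$, where $a\sqsubseteq a'$ iff there is $r\in\Phi$ with $ra\le a'$, and the preorder $(\mathcal P_\bullet(A),\sqsubseteq_\bullet)$ computed in $\mathcal K$, where $C\sqsubseteq_\bullet C'$ iff there is $t\in\Phi$ with $t\le x$ for every $x\in C\to_\bullet C'$. Then these preorders are equivalent; more precisely, $\rho:\mathcal P_\bullet(A)\to A$, $\rho(C)=\inf C$, is an equivalence of preorders. Consequently the Heyting preorder $\mathcal H_{\mathcal A}$ associated to $\mathcal A$ is equivalent to the Heyting preorder $\mathcal H_{\mathcal A_{\mathcal K\bullet}}$ associated to the full adjunction implicative ordered combinatory algebra $\mathcal A_{\mathcal K\bullet}$ built from $\mathcal K$.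
   Context: A full adjunction implicative ordered combinatory algebra is an inf-complete poset $(A,\le)$ with application $ab$ monotone in both arguments, implication $a\to b$ antimonotone in the first and monotone in the second argument, elements $\mathsf k,\mathsf s$ with $\mathsf k ab\le a$, $\mathsf s abc\le ac(bc)$, such that $a\le b\to c\iff ab\le c$, and a subset $\Phi\subseteq A$ closed under application containing $\mathsf s,\mathsf k$. Its Heyting preorder $\mathcal H_{\mathcal A}$ has underlying preorder $(A,\sqsubseteq)$ as in the claim. In $\mathcal K$: polars ${}^\perp P=\{t:\forall\pi\in P,\ t\le\pi\}$, $L^\perp=\{\pi:\forall t\in L,\ t\le\pi\}$; $\overline P=({}^\perp P)^\perp$; $\widehat P=\bigcup_{\pi\in P}\overline{\{\pi\}}$; $\mathcal P_\bullet(A)=\{P\subseteq A:\widehat P=P\}$; $C\to_\bullet C'=\widehat{\{s\to\pi:s\in{}^\perp C,\pi\in C'\}}$. $\mathcal A_{\mathcal K\bullet}$ has carrier $\mathcal P_\bullet(A)$ ordered by $\supseteq$, application $P\circ_\bullet Q=\{\pi:s\to\pi'\in P\ \forall s\in{}^\perp Q,\ \pi'\in\overline{\{\pi\}}\}$, implication $\to_\bullet$, and filter $\{P\in\mathcal P_\bullet(A):\exists t\in\Phi,\ t\le P\}$; its Heyting preorder has order $Q\sqsubseteq R$ iff some $F$ in this filter has $F\circ_\bullet Q\supseteq R$, and this order coincides with $\sqsubseteq_\bullet$. A monotone map of preorders is an equivalence if it has a monotone weak inverse (compositions pointwise isomorphic to identities). *)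

theory Defs
  imports Main
begin

text \<open>The carrier is a type
  whose order is inf-complete; every inf-complete poset is a complete lattice, so we use the
  class complete_lattice. app is application, imp is implication.\<close>

definition full_adj_ioca ::
  "('a::complete_lattice \<Rightarrow> 'a \<Rightarrow> 'a) \<Rightarrow> ('a \<Rightarrow> 'a \<Rightarrow> 'a) \<Rightarrow> 'a \<Rightarrow> 'a \<Rightarrow> 'a set \<Rightarrow> bool" where
  "full_adj_ioca app imp k s Phi \<longleftrightarrow>
     (\<forall>a a' b b'. a \<le> a' \<longrightarrow> b \<le> b' \<longrightarrow> app a b \<le> app a' b') \<and>
     (\<forall>a a' b b'. a' \<le> a \<longrightarrow> b \<le> b' \<longrightarrow> imp a b \<le> imp a' b') \<and>
     (\<forall>a b. app (app k a) b \<le> a) \<and>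
     (\<forall>a b c. app (app (app s a) b) c \<le> app (app a c) (app b c)) \<and>
     (\<forall>a b c. a \<le> imp b c \<longleftrightarrow> app a b \<le> c) \<and>
     (\<forall>a\<in>Phi. \<forall>b\<in>Phi. app a b \<in> Phi) \<and> k \<in> Phi \<and> s \<in> Phi"

definition ioca_ord :: "('a::complete_lattice \<Rightarrow> 'a \<Rightarrow> 'a) \<Rightarrow> 'a set \<Rightarrow> 'a \<Rightarrow> 'a \<Rightarrow> bool" where
  "ioca_ord app Phi a a' \<longleftrightarrow> (\<exists>r\<in>Phi. app r a \<le> a')"

text \<open>Krivine structure K with Lambda = Pi = A, s \<perp> pi iff s \<le> pi.\<close>
definition lpolar :: "'a::complete_lattice set \<Rightarrow> 'a set" where
  "lpolar P = {t. \<forall>\<pi>\<in>P. t \<le> \<pi>}"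

definition rpolar :: "'a::complete_lattice set \<Rightarrow> 'a set" where
  "rpolar L = {\<pi>. \<forall>t\<in>L. t \<le> \<pi>}"

definition bclos :: "'a::complete_lattice set \<Rightarrow> 'a set" where
  "bclos P = rpolar (lpolar P)"

definition hatclos :: "'a::complete_lattice set \<Rightarrow> 'a set" where
  "hatclos P = (\<Union>\<pi>\<in>P. bclos {\<pi>})"

definition Pbullet :: "'a::complete_lattice set set" where
  "Pbullet = {P. hatclos P = P}"

definition imp_bullet :: "('a::complete_lattice \<Rightarrow> 'a \<Rightarrow> 'a) \<Rightarrow> 'a set \<Rightarrow> 'a set \<Rightarrow> 'a set" where
  "imp_bullet imp C C' = hatclos {imp s \<pi> | s \<pi>. s \<in> lpolar C \<and> \<pi> \<in> C'}"

definition bullet_ord :: "('a::complete_lattice \<Rightarrow> 'a \<Rightarrow> 'a) \<Rightarrow> 'a set \<Rightarrow> 'a set \<Rightarrow> 'a set \<Rightarrow> bool" where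
  "bullet_ord imp Phi C C' \<longleftrightarrow> (\<exists>t\<in>Phi. \<forall>x\<in>imp_bullet imp C C'. t \<le> x)"

definition app_bullet :: "('a::complete_lattice \<Rightarrow> 'a \<Rightarrow> 'a) \<Rightarrow> 'a set \<Rightarrow> 'a set \<Rightarrow> 'a set" where
  "app_bullet imp P Q = {\<pi>. \<forall>s\<in>lpolar Q. \<forall>\<pi>'\<in>bclos {\<pi>}. imp s \<pi>' \<in> P}"

definition filter_bullet :: "'a::complete_lattice set \<Rightarrow> 'a set set" where
  "filter_bullet Phi = {P \<in> Pbullet. \<exists>t\<in>Phi. \<forall>x\<in>P. t \<le> x}"

definition heyting_bullet_ord :: "('a::complete_lattice \<Rightarrow> 'a \<Rightarrow> 'a) \<Rightarrow> 'a set \<Rightarrow> 'a set \<Rightarrow> 'a set \<Rightarrow> bool" where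
  "heyting_bullet_ord imp Phi Q R \<longleftrightarrow> (\<exists>F\<in>filter_bullet Phi. app_bullet imp F Q \<supseteq> R)"

definition preorder_equivalence ::
  "'x set \<Rightarrow> ('x \<Rightarrow> 'x \<Rightarrow> bool) \<Rightarrow> 'y set \<Rightarrow> ('y \<Rightarrow> 'y \<Rightarrow> bool) \<Rightarrow> ('x \<Rightarrow> 'y) \<Rightarrow> bool" where
  "preorder_equivalence X rX Y rY f \<longleftrightarrow>
     (\<forall>x\<in>X. f x \<in> Y) \<and> (\<forall>x\<in>X. \<forall>x'\<in>X. rX x x' \<longrightarrow> rY (f x) (f x')) \<and>
     (\<exists>g. (\<forall>y\<in>Y. g y \<in> X) \<and> (\<forall>y\<in>Y. \<forall>y'\<in>Y. rY y y' \<longrightarrow> rX (g y) (g y')) \<and>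
          (\<forall>x\<in>X. rX (g (f x)) x \<and> rX x (g (f x))) \<and>
          (\<forall>y\<in>Y. rY (f (g y)) y \<and> rY y (f (g y))))"

end

theory Submission
  imports Defs
begin

text \<open>Since orthogonality is the order, the closure of a singleton is the principal up-set
  \<open>{\<pi>..}\<close> and the left polar of any \<open>C\<close> is the down-set \<open>{..Inf C}\<close>. Hence an element of
  \<open>C \<rightarrow>\<^sub>\<bullet> C'\<close> lies above some \<open>s \<rightarrow> \<pi>\<close> with \<open>s \<le> Inf C\<close> and \<open>\<pi> \<in> C'\<close>, and by the adjunction
  a realiser \<open>t\<close> of \<open>C \<sqsubseteq>\<^sub>\<bullet> C'\<close> is exactly an \<open>r \<in> \<Phi>\<close> with \<open>r (Inf C) \<le> Inf C'\<close>; the same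
  computation applies to the Heyting order of \<open>\<A>\<^sub>\<K>\<^sub>\<bullet>\<close>, taking \<open>F = {t..}\<close> as filter element.
  So both orders are the pullback of \<open>\<sqsubseteq>\<close> along \<open>Inf\<close>, and \<open>a \<mapsto> {a..}\<close> is a weak inverse,
  being a section of \<open>Inf\<close> whose composite the other way is isomorphic to the identity
  by reflexivity of \<open>\<sqsubseteq>\<close>.\<close>

lemma bclos_singleton: "bclos {p} = {p::'a::complete_lattice..}"
  unfolding bclos_def lpolar_def rpolar_def by (auto intro: order_trans)

lemma lpolar_eq_atMost_Inf: "lpolar C = {..Inf C::'a::complete_lattice}"
  unfolding lpolar_def by (auto intro: Inf_greatest Inf_lower order_trans)

lemma atLeast_in_Pbullet: "{a::'a::complete_lattice..} \<in> Pbullet"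
  unfolding Pbullet_def hatclos_def bclos_singleton by (auto intro: order_trans)

lemma mem_imp_bullet_iff:
  "x \<in> imp_bullet imp C C' \<longleftrightarrow> (\<exists>s p. s \<le> Inf C \<and> p \<in> C' \<and> imp s p \<le> x)"
  unfolding imp_bullet_def hatclos_def bclos_singleton lpolar_eq_atMost_Inf by auto

lemma mem_app_bullet_iff:
  "p \<in> app_bullet imp P Q \<longleftrightarrow> (\<forall>s \<le> Inf Q. \<forall>p' \<ge> p. imp s p' \<in> P)"
  unfolding app_bullet_def bclos_singleton lpolar_eq_atMost_Inf by auto

lemma ioca_ord_refl:
  assumes "full_adj_ioca app imp k s Phi"
  shows "ioca_ord app Phi a a"
proof -
  have "app (app s k) k \<in> Phi" using assms unfolding full_adj_ioca_def by blast
  moreover have "app (app (app s k) k) a \<le> app (app k a) (app k a)"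
    using assms unfolding full_adj_ioca_def by blast
  moreover have "app (app k a) (app k a) \<le> a" using assms unfolding full_adj_ioca_def by blast
  ultimately show ?thesis unfolding ioca_ord_def by (blast intro: order_trans)
qed

lemma preorder_equivalence_Pbullet_Inf:
  assumes rX: "\<And>C C'. rX C C' \<longleftrightarrow> r (Inf C) (Inf C')"
    and refl: "\<And>a. r a a"
  shows "preorder_equivalence Pbullet rX UNIV r (Inf :: 'a::complete_lattice set \<Rightarrow> 'a)"
  unfolding preorder_equivalence_def
  by (intro conjI exI[of _ "\<lambda>a. {a..}"]) (simp_all add: rX refl atLeast_in_Pbullet)

lemma bullet_ord_iff_ioca_ord_Inf:
  assumes adj: "\<And>a b c. a \<le> imp b c \<longleftrightarrow> app a b \<le> c"
    and imp_antimono: "\<And>a a' b. a' \<le> a \<Longrightarrow> imp a b \<le> imp a' b"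
  shows "bullet_ord imp Phi C C' \<longleftrightarrow> ioca_ord app Phi (Inf C) (Inf C')"
proof -
  have "(\<forall>x\<in>imp_bullet imp C C'. t \<le> x) \<longleftrightarrow> app t (Inf C) \<le> Inf C'" for t
  proof
    assume "\<forall>x\<in>imp_bullet imp C C'. t \<le> x"
    moreover have "imp (Inf C) p \<in> imp_bullet imp C C'" if "p \<in> C'" for p
      using that by (auto simp: mem_imp_bullet_iff)
    ultimately have "t \<le> imp (Inf C) p" if "p \<in> C'" for p
      using that by blast
    then show "app t (Inf C) \<le> Inf C'" by (auto simp: adj intro: Inf_greatest)
  next
    assume t: "app t (Inf C) \<le> Inf C'"
    show "\<forall>x\<in>imp_bullet imp C C'. t \<le> x"
    proof
      fix x assume "x \<in> imp_bullet imp C C'"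
      then obtain s p where "s \<le> Inf C" "p \<in> C'" "imp s p \<le> x"
        by (auto simp: mem_imp_bullet_iff)
      moreover from t \<open>p \<in> C'\<close> have "app t (Inf C) \<le> p"
        by (meson Inf_lower order_trans)
      then have "t \<le> imp (Inf C) p" using adj by blast
      ultimately show "t \<le> x" by (meson imp_antimono order_trans)
    qed
  qed
  then show ?thesis unfolding bullet_ord_def ioca_ord_def by blast
qed

lemma heyting_bullet_ord_iff_ioca_ord_Inf:
  assumes adj: "\<And>a b c. a \<le> imp b c \<longleftrightarrow> app a b \<le> c"
    and app_mono: "\<And>a b b'. b \<le> b' \<Longrightarrow> app a b \<le> app a b'"
  shows "heyting_bullet_ord imp Phi Q R \<longleftrightarrow> ioca_ord app Phi (Inf Q) (Inf R)"
proof
  assume "heyting_bullet_ord imp Phi Q R"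
  then obtain F t where F: "R \<subseteq> app_bullet imp F Q" and "t \<in> Phi" and t: "\<forall>x\<in>F. t \<le> x"
    unfolding heyting_bullet_ord_def filter_bullet_def by blast
  have "app t (Inf Q) \<le> p" if "p \<in> R" for p
  proof -
    from that F have "imp (Inf Q) p \<in> F" by (auto simp: mem_app_bullet_iff)
    with t adj show ?thesis by blast
  qed
  then have "app t (Inf Q) \<le> Inf R" by (rule Inf_greatest)
  with \<open>t \<in> Phi\<close> show "ioca_ord app Phi (Inf Q) (Inf R)" unfolding ioca_ord_def by blast
next
  assume "ioca_ord app Phi (Inf Q) (Inf R)"
  then obtain t where "t \<in> Phi" and t: "app t (Inf Q) \<le> Inf R" unfolding ioca_ord_def by blast
  have "{t..} \<in> filter_bullet Phi"
    unfolding filter_bullet_def using atLeast_in_Pbullet \<open>t \<in> Phi\<close> by auto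
  moreover have "R \<subseteq> app_bullet imp {t..} Q"
  proof
    fix p assume "p \<in> R"
    have "t \<le> imp s p'" if "s \<le> Inf Q" "p \<le> p'" for s p'
    proof -
      have "app t s \<le> app t (Inf Q)" using app_mono \<open>s \<le> Inf Q\<close> .
      also have "\<dots> \<le> Inf R" by (rule t)
      also have "\<dots> \<le> p" using \<open>p \<in> R\<close> by (rule Inf_lower)
      also have "\<dots> \<le> p'" by (rule \<open>p \<le> p'\<close>)
      finally show ?thesis by (simp add: adj)
    qed
    then show "p \<in> app_bullet imp {t..} Q" by (auto simp: mem_app_bullet_iff)
  qed
  ultimately show "heyting_bullet_ord imp Phi Q R" unfolding heyting_bullet_ord_def by blast
qed

theorem mainTheorem14:
  fixes app imp :: "'a::complete_lattice \<Rightarrow> 'a \<Rightarrow> 'a" and k s :: 'a and Phi :: "'a set"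
  assumes "full_adj_ioca app imp k s Phi"
  shows "preorder_equivalence Pbullet (bullet_ord imp Phi) UNIV (ioca_ord app Phi) Inf
       \<and> preorder_equivalence Pbullet (heyting_bullet_ord imp Phi) UNIV (ioca_ord app Phi) Inf"
proof -
  have adj: "\<And>a b c. a \<le> imp b c \<longleftrightarrow> app a b \<le> c"
    and imp_antimono: "\<And>a a' b. a' \<le> a \<Longrightarrow> imp a b \<le> imp a' b"
    and app_mono: "\<And>a b b'. b \<le> b' \<Longrightarrow> app a b \<le> app a b'"
    using assms unfolding full_adj_ioca_def by blast+
  have "bullet_ord imp Phi C C' \<longleftrightarrow> ioca_ord app Phi (Inf C) (Inf C')" for C C'
    using adj imp_antimono by (rule bullet_ord_iff_ioca_ord_Inf)
  moreover have "heyting_bullet_ord imp Phi Q R \<longleftrightarrow> ioca_ord app Phi (Inf Q) (Inf R)" for Q R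
    using adj app_mono by (rule heyting_bullet_ord_iff_ioca_ord_Inf)
  ultimately show ?thesis
    using ioca_ord_refl[OF assms] by (blast intro: preorder_equivalence_Pbullet_Inf)
qed

end
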